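(* Let $p(\cdot)\in\mathcal{P}(\mathbb{R}^n)$, $1\le q,\alpha\le\infty$, with $p(x)\le\alpha\le q$ for all $x$. Then for every $r>0$, $$r^{\frac n\alpha-N_{r,p}}\Big\|\big\{\|f\chi_{Q_{r,k}}\|_{L^{p(\cdot)}}\big\}_{k\in\mathbb{Z}^n}\Big\|_{\ell^{q}}\sim\Big\|\,r^{\frac n\alpha-\frac n{p(\cdot)}-\frac nq}\|f\chi_{B(\cdot,r)}\|_{L^{p(\cdot)}}\Big\|_{L^{q}},$$ where the positive equivalence constants are independent of $f$.
   Context: $\mathcal{P}(\mathbb{R}^n)$: measurable $p(\cdot):\mathbb{R}^n\to[1,\infty)$ with $p_-=\operatorname{ess\,inf}p>1$, $p^+=\operatorname{ess\,sup}p<\infty$. $\|\cdot\|_{L^{p(\cdot)}}$ is the Luxemburg norm. $Q_{r,k}=r(k+[0,1)^n)$ for $k\in\mathbb{Z}^n$; $N_{r,p}=n/p_-$ if $r>1$ and $N_{r,p}=n/p^+$ if $r\le1$. On the right, the $L^q$ norm is in the variable $x$ of $x\mapsto r^{n/\alpha-n/p(x)-n/q}\|f\chi_{B(x,r)}\|_{L^{p(\cdot)}}$, with $B(x,r)$ the open ball. *)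

theory Defs
  imports "HOL-Analysis.Analysis"
begin

definition epow :: "ennreal \<Rightarrow> real \<Rightarrow> ennreal" where
  "epow x a = (if x = \<infinity> then \<infinity> else ennreal (enn2real x powr a))"

definition einv :: "ennreal \<Rightarrow> real" where
  "einv q = (if q = \<infinity> then 0 else 1 / enn2real q)"

definition p_minus :: "(real^'n \<Rightarrow> real) \<Rightarrow> real" where
  "p_minus p = Sup {a. AE x in lebesgue. a \<le> p x}"

definition p_plus :: "(real^'n \<Rightarrow> real) \<Rightarrow> real" where
  "p_plus p = Inf {a. AE x in lebesgue. p x \<le> a}"

definition var_exp :: "(real^'n \<Rightarrow> real) \<Rightarrow> bool" where
  "var_exp p \<longleftrightarrow> p \<in> borel_measurable lebesgue \<and> (\<forall>x. 1 \<le> p x)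
     \<and> 1 < p_minus p \<and> (\<exists>M. AE x in lebesgue. p x \<le> M)"

text \<open>Luxemburg norm of L^{p(.)} (value infinity if f is not in the space).\<close>
definition lux_norm :: "(real^'n \<Rightarrow> real) \<Rightarrow> (real^'n \<Rightarrow> real) \<Rightarrow> ennreal" where
  "lux_norm p f = (INF t\<in>{t::real. 0 < t \<and>
      (\<integral>\<^sup>+ x. ennreal (\<bar>f x / t\<bar> powr p x) \<partial>lebesgue) \<le> 1}. ennreal t)"

definition N_rp :: "real \<Rightarrow> (real^'n \<Rightarrow> real) \<Rightarrow> real" where
  "N_rp r p = (if r > 1 then real CARD('n) / p_minus p else real CARD('n) / p_plus p)"

definition cube :: "real \<Rightarrow> int^'n \<Rightarrow> (real^'n) set" where
  "cube r k = {x. \<forall>i. r * of_int (k$i) \<le> x$i \<and> x$i < r * (of_int (k$i) + 1)}"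

definition lq_seq_norm :: "ennreal \<Rightarrow> (int^'n \<Rightarrow> ennreal) \<Rightarrow> ennreal" where
  "lq_seq_norm q a = (if q = \<infinity> then (SUP k. a k)
     else epow (\<integral>\<^sup>+ k. epow (a k) (enn2real q) \<partial>count_space UNIV) (1 / enn2real q))"

definition Lq_norm :: "ennreal \<Rightarrow> (real^'n \<Rightarrow> ennreal) \<Rightarrow> ennreal" where
  "Lq_norm q g = (if q = \<infinity> then Inf {z. AE x in lebesgue. g x \<le> z}
     else epow (\<integral>\<^sup>+ x. epow (g x) (enn2real q) \<partial>lebesgue) (1 / enn2real q))"

end

theory Submission
  imports Defs
begin

text \<open>For fixed \<open>r\<close> the weight \<open>r powr (n/\<alpha> - n/p x - n/q)\<close> lies between two positive constants,
  since \<open>1 \<le> p x\<close> confines \<open>n / p x\<close> to \<open>(0, n]\<close>.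

  A ball \<open>B(x, r)\<close> is covered by the \<open>3\<^sup>n\<close> cubes \<open>Q\<^sub>r\<^sub>,\<^sub>k\<close> adjacent to the one containing \<open>x\<close>, so
  its norm is at most \<open>3\<^sup>n\<close> times the largest of theirs. Conversely \<open>Q\<^sub>r\<^sub>,\<^sub>k\<close> splits into
  \<open>(n + 1)\<^sup>n\<close> subcubes of side \<open>r / (n + 1)\<close>; the one of largest norm lies in \<open>B(x, r)\<close> for each
  of its points \<open>x\<close>, so the norm on \<open>Q\<^sub>r\<^sub>,\<^sub>k\<close> is at most \<open>(n + 1)\<^sup>n\<close> times the ball norm on a set
  of measure \<open>(r / (n + 1))\<^sup>n\<close> inside \<open>Q\<^sub>r\<^sub>,\<^sub>k\<close>. Integrating these pointwise bounds cube by cube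
  compares the \<open>L\<^sup>q\<close> and \<open>l\<^sup>q\<close> norms (for \<open>q = \<infinity>\<close>: essential supremum and supremum).\<close>

definition cube_index :: "real \<Rightarrow> real^'n \<Rightarrow> int^'n" where
  "cube_index r x = (\<chi> i. \<lfloor>x$i / r\<rfloor>)"

lemma mem_cube_iff:
  assumes "0 < r" shows "x \<in> cube r k \<longleftrightarrow> k = cube_index r x"
proof -
  have "(r * of_int (k$i) \<le> x$i \<and> x$i < r * (of_int (k$i) + 1)) \<longleftrightarrow> k$i = \<lfloor>x$i / r\<rfloor>" for i
  proof -
    have "k$i = \<lfloor>x$i / r\<rfloor> \<longleftrightarrow> of_int (k$i) \<le> x$i / r \<and> x$i / r < of_int (k$i) + 1"
      by (metis floor_eq_iff)
    also have "\<dots> \<longleftrightarrow> r * of_int (k$i) \<le> x$i \<and> x$i < r * (of_int (k$i) + 1)"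
      using assms by (simp add: le_divide_eq divide_less_eq mult.commute)
    finally show ?thesis by simp
  qed
  then show ?thesis unfolding cube_def cube_index_def by (auto simp: vec_eq_iff)
qed

lemma cube_in_sets_lebesgue [measurable]: "cube r k \<in> sets lebesgue"
proof -
  have "cube r k = (\<Inter>i. {x. r * of_int (k$i) \<le> x$i} \<inter> {x. x$i < r * (of_int (k$i) + 1)})"
    unfolding cube_def by auto
  also have "\<dots> \<in> sets borel"
    by (intro sets.countable_INT' sets.Int borel_closed borel_open
        closed_halfspace_component_ge_cart open_halfspace_component_lt_cart) auto
  finally show ?thesis by (metis sets_lborel sets_completionI_sets)
qed

lemma emeasure_cube:
  fixes k :: "int^'n::finite"
  assumes "0 < r" shows "emeasure lebesgue (cube r k) = ennreal (r ^ CARD('n))"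
proof -
  define l :: "real^'n" where "l = (\<chi> i. r * of_int (k$i))"
  define u :: "real^'n" where "u = (\<chi> i. r * (of_int (k$i) + 1))"
  have sub: "box l u \<subseteq> cube r k" "cube r k \<subseteq> cbox l u"
    by (auto simp: l_def u_def cube_def mem_box_cart less_imp_le)
  have "(\<Prod>b\<in>Basis. (u - l) \<bullet> b) = (\<Prod>b\<in>(Basis::(real^'n) set). r)"
    by (rule prod.cong) (auto simp: Basis_vec_def inner_axis l_def u_def algebra_simps)
  then have vol: "(\<Prod>b\<in>Basis. (u - l) \<bullet> b) = r ^ CARD('n)" by simp
  have le: "\<forall>b\<in>Basis. l \<bullet> b \<le> u \<bullet> b"
    using assms by (auto simp: Basis_vec_def inner_axis l_def u_def)
  have "emeasure lebesgue (box l u) = ennreal (r ^ CARD('n))"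
       "emeasure lebesgue (cbox l u) = ennreal (r ^ CARD('n))"
    using le vol by (simp_all add: emeasure_lborel_box_eq emeasure_lborel_cbox_eq)
  then show ?thesis
    using emeasure_mono[OF sub(1), of lebesgue] emeasure_mono[OF sub(2), of lebesgue]
    by (simp add: antisym)
qed

lemma nn_integral_cube_index_indicator:
  fixes \<phi> :: "int^'n::finite \<Rightarrow> ennreal" and P :: "int^'n \<Rightarrow> (real^'n) set"
  assumes r: "0 < r" and P: "\<And>k. P k \<in> sets lebesgue" "\<And>k. P k \<subseteq> cube r k"
  shows "(\<integral>\<^sup>+x. indicator (P (cube_index r x)) x * \<phi> (cube_index r x) \<partial>lebesgue)
       = (\<integral>\<^sup>+k. \<phi> k * emeasure lebesgue (P k) \<partial>count_space UNIV)"
proof -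
  have single: "(\<integral>\<^sup>+k. indicator (P k) x * \<phi> k \<partial>count_space UNIV)
      = indicator (P (cube_index r x)) x * \<phi> (cube_index r x)" for x
  proof -
    have "(\<integral>\<^sup>+k. indicator (P k) x * \<phi> k \<partial>count_space UNIV)
        = (\<integral>\<^sup>+k. (indicator (P k) x * \<phi> k) * indicator {cube_index r x} k \<partial>count_space UNIV)"
      using P(2) mem_cube_iff[OF r, of x]
      by (intro nn_integral_cong) (auto split: split_indicator)
    then show ?thesis by simp
  qed
  have "(\<integral>\<^sup>+x. indicator (P (cube_index r x)) x * \<phi> (cube_index r x) \<partial>lebesgue)
      = (\<integral>\<^sup>+x. (\<integral>\<^sup>+k. indicator (P k) x * \<phi> k \<partial>count_space UNIV) \<partial>lebesgue)"
    by (simp add: single)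
  also have "\<dots> = (\<integral>\<^sup>+k. (\<integral>\<^sup>+x. \<phi> k * indicator (P k) x \<partial>lebesgue) \<partial>count_space UNIV)"
    by (subst nn_integral_count_space_nn_integral)
      (auto simp: mult.commute intro!: borel_measurable_times_ennreal borel_measurable_indicator P(1))
  also have "\<dots> = (\<integral>\<^sup>+k. \<phi> k * emeasure lebesgue (P k) \<partial>count_space UNIV)"
    by (simp add: nn_integral_cmult_indicator P(1))
  finally show ?thesis .
qed

lemma nn_integral_cube_index:
  fixes \<phi> :: "int^'n::finite \<Rightarrow> ennreal"
  assumes r: "0 < r"
  shows "(\<integral>\<^sup>+x. \<phi> (cube_index r x) \<partial>lebesgue)
       = ennreal (r ^ CARD('n)) * (\<integral>\<^sup>+k. \<phi> k \<partial>count_space UNIV)"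
proof -
  have "(\<integral>\<^sup>+x. \<phi> (cube_index r x) \<partial>lebesgue)
      = (\<integral>\<^sup>+x. indicator (cube r (cube_index r x)) x * \<phi> (cube_index r x) \<partial>lebesgue)"
    using mem_cube_iff[OF r] by (intro nn_integral_cong) (auto split: split_indicator)
  also have "\<dots> = (\<integral>\<^sup>+k. \<phi> k * emeasure lebesgue (cube r k) \<partial>count_space UNIV)"
    by (rule nn_integral_cube_index_indicator[OF r]) auto
  also have "\<dots> = (\<integral>\<^sup>+k. ennreal (r ^ CARD('n)) * \<phi> k \<partial>count_space UNIV)"
    by (simp add: emeasure_cube[OF r] mult.commute)
  finally show ?thesis by (simp add: nn_integral_cmult)
qed

lemma nn_integral_count_space_shift:
  fixes \<psi> :: "'a::group_add \<Rightarrow> ennreal"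
  shows "(\<integral>\<^sup>+k. \<psi> (k + d) \<partial>count_space UNIV) = (\<integral>\<^sup>+k. \<psi> k \<partial>count_space UNIV)"
proof -
  have "bij_betw (\<lambda>k. k + d) UNIV UNIV"
    by (rule bij_betwI[where g="\<lambda>k. k - d"]) auto
  then show ?thesis by (rule nn_integral_bij_count_space)
qed

definition int_box :: "int \<Rightarrow> int \<Rightarrow> (int^'n) set" where
  "int_box a b = {d. \<forall>i. d$i \<in> {a..b}}"

lemma finite_int_box: "finite (int_box a b :: (int^'n::finite) set)"
proof -
  have "(int_box a b :: (int^'n) set) \<subseteq> vec_lambda ` (PiE UNIV (\<lambda>_. {a..b}))"
  proof
    fix d :: "int^'n" assume "d \<in> int_box a b"
    then have "vec_nth d \<in> PiE UNIV (\<lambda>_. {a..b})" by (auto simp: int_box_def)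
    then show "d \<in> vec_lambda ` (PiE UNIV (\<lambda>_. {a..b}))" by (metis image_eqI vec_nth_inverse)
  qed
  moreover have "finite (vec_lambda ` (PiE UNIV (\<lambda>_. {a..b})) :: (int^'n) set)"
    by (intro finite_imageI finite_PiE) auto
  ultimately show ?thesis by (rule finite_subset)
qed

lemma zero_in_int_box: "a \<le> 0 \<Longrightarrow> 0 \<le> b \<Longrightarrow> 0 \<in> int_box a b"
  by (simp add: int_box_def)

lemma ball_subset_neighbour_cubes:
  fixes x :: "real^'n::finite"
  assumes r: "0 < r"
  shows "ball x r \<subseteq> (\<Union>d\<in>int_box (-1) 1. cube r (cube_index r x + d))"
proof
  fix y assume y: "y \<in> ball x r"
  have "cube_index r y - cube_index r x \<in> int_box (-1) 1"
    unfolding int_box_def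
  proof (safe)
    fix i
    have "\<bar>y$i - x$i\<bar> < r"
      using y component_le_norm_cart[of "y - x" i] by (simp add: dist_norm norm_minus_commute)
    then have "y$i / r < x$i / r + 1" "x$i / r < y$i / r + 1"
      using r by (auto simp: field_simps)
    then have "\<lfloor>y$i / r\<rfloor> \<le> \<lfloor>x$i / r\<rfloor> + 1" "\<lfloor>x$i / r\<rfloor> \<le> \<lfloor>y$i / r\<rfloor> + 1"
      by (metis floor_add_int floor_mono less_imp_le of_int_1)+
    then show "(cube_index r y - cube_index r x) $ i \<in> {-1..1}" by (simp add: cube_index_def)
  qed
  moreover have "y \<in> cube r (cube_index r x + (cube_index r y - cube_index r x))"
    using mem_cube_iff[OF r, of y] by simp
  ultimately show "y \<in> (\<Union>d\<in>int_box (-1) 1. cube r (cube_index r x + d))" by blast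
qed

lemma cube_subset_ball:
  fixes x :: "real^'n::finite"
  assumes s: "real CARD('n) * s \<le> r" and x: "x \<in> cube s j"
  shows "cube s j \<subseteq> ball x r"
proof
  fix y assume y: "y \<in> cube s j"
  have "\<bar>(x - y)$i\<bar> < s" for i
  proof -
    have "s * of_int (j$i) \<le> x$i \<and> x$i < s * of_int (j$i) + s"
         "s * of_int (j$i) \<le> y$i \<and> y$i < s * of_int (j$i) + s"
      using x y by (auto simp: cube_def distrib_left)
    then show ?thesis unfolding abs_less_iff by simp
  qed
  then have "dist x y < (\<Sum>i\<in>(UNIV::'n set). s)"
    unfolding dist_norm by (intro le_less_trans[OF norm_le_l1_cart] sum_strict_mono) auto
  then show "y \<in> ball x r" using s by simp
qed

definition subcube_index :: "nat \<Rightarrow> int^'n \<Rightarrow> int^'n \<Rightarrow> int^'n" where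
  "subcube_index m k e = (\<chi> i. int m * k$i + e$i)"

lemma subcube_subset_cube:
  assumes r: "0 < r" and m: "0 < m" and e: "e \<in> int_box 0 (int m - 1)"
  shows "cube (r / m) (subcube_index m k e) \<subseteq> cube r k"
proof
  fix y assume y: "y \<in> cube (r / m) (subcube_index m k e)"
  show "y \<in> cube r k" unfolding cube_def
  proof (safe)
    fix i
    have y1: "r / m * of_int (int m * k$i + e$i) \<le> y$i"
      and y2: "y$i < r / m * (of_int (int m * k$i + e$i) + 1)"
      using y by (auto simp: cube_def subcube_index_def)
    have "e$i \<in> {0..int m - 1}" using e by (simp add: int_box_def)
    then have e0: "0 \<le> e$i" and "e$i + 1 \<le> int m" by auto
    then have e1: "real_of_int (e$i) + 1 \<le> real m" by linarith
    have "r * of_int (k$i) \<le> r / m * of_int (int m * k$i + e$i)"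
      using r m e0 by (simp add: field_simps)
    then show "r * of_int (k$i) \<le> y$i" using y1 by linarith
    have "r / m * (real_of_int (e$i) + 1) \<le> r / m * m"
      using r m e1 by (intro mult_left_mono) auto
    then have "r / m * (of_int (int m * k$i + e$i) + 1) \<le> r * (of_int (k$i) + 1)"
      using r m by (simp add: field_simps)
    then show "y$i < r * (of_int (k$i) + 1)" using y2 by linarith
  qed
qed

lemma cube_subset_subcubes:
  assumes r: "0 < r" and m: "0 < m"
  shows "cube r k \<subseteq> (\<Union>e\<in>int_box 0 (int m - 1). cube (r / m) (subcube_index m k e))"
proof
  fix y assume y: "y \<in> cube r k"
  define e where "e = cube_index (r / m) y - (\<chi> i. int m * k$i)"
  have rm: "0 < r / m" using r m by simp
  have "e$i \<in> {0..int m - 1}" for i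
  proof -
    have "of_int (int m * k$i) * (r / m) = r * of_int (k$i)"
      "of_int (int m * k$i + int m) * (r / m) = r * (of_int (k$i) + 1)"
      using m by (simp_all add: field_simps)
    then have "of_int (int m * k$i) * (r / m) \<le> y$i" "y$i < of_int (int m * k$i + int m) * (r / m)"
      using y by (auto simp: cube_def)
    then have "of_int (int m * k$i) \<le> y$i / (r / m)" "y$i / (r / m) < of_int (int m * k$i + int m)"
      using pos_le_divide_eq[OF rm] pos_divide_less_eq[OF rm] by blast+
    then have "int m * k$i \<le> \<lfloor>y$i / (r / m)\<rfloor>" "\<lfloor>y$i / (r / m)\<rfloor> < int m * k$i + int m"
      by (simp_all add: le_floor_iff floor_less_iff)
    then show ?thesis by (simp add: e_def cube_index_def)
  qed
  moreover have "subcube_index m k e = cube_index (r / m) y"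
    by (simp add: subcube_index_def e_def vec_eq_iff)
  then have "y \<in> cube (r / m) (subcube_index m k e)"
    using mem_cube_iff[OF rm, of y "cube_index (r / m) y"] by simp
  ultimately show "y \<in> (\<Union>e\<in>int_box 0 (int m - 1). cube (r / m) (subcube_index m k e))"
    by (auto simp: int_box_def)
qed

definition modular :: "(real^'n \<Rightarrow> real) \<Rightarrow> (real^'n \<Rightarrow> real) \<Rightarrow> ennreal" where
  "modular p g = (\<integral>\<^sup>+ x. ennreal (\<bar>g x\<bar> powr p x) \<partial>lebesgue)"

lemma lux_norm_eq_INF_modular:
  "lux_norm p f = (INF t\<in>{t. 0 < t \<and> modular p (\<lambda>x. f x / t) \<le> 1}. ennreal t)"
  by (simp add: lux_norm_def modular_def)

lemma modular_mono:
  assumes "\<And>x. \<bar>g x\<bar> \<le> \<bar>h x\<bar>" "\<And>x. 0 \<le> p x"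
  shows "modular p g \<le> modular p h"
  unfolding modular_def using assms by (intro nn_integral_mono ennreal_leI powr_mono2) auto

lemma lux_norm_le:
  assumes "0 < t" "modular p (\<lambda>x. f x / t) \<le> 1"
  shows "lux_norm p f \<le> ennreal t"
  unfolding lux_norm_eq_INF_modular using assms by (auto intro!: INF_lower2)

lemma lux_norm_le_if_modular_le_1:
  assumes "0 \<le> c" "\<And>t. c < t \<Longrightarrow> modular p (\<lambda>x. f x / t) \<le> 1"
  shows "lux_norm p f \<le> ennreal c"
proof (rule ennreal_le_epsilon)
  fix e :: real assume "0 < e"
  then have "lux_norm p f \<le> ennreal (c + e)"
    using assms by (intro lux_norm_le) auto
  then show "lux_norm p f \<le> ennreal c + ennreal e"
    using assms(1) \<open>0 < e\<close> by (simp add: ennreal_plus)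
qed

lemma modular_le_1_if_lux_norm_less:
  assumes "lux_norm p f < ennreal t" "\<And>x. 0 \<le> p x"
  shows "modular p (\<lambda>x. f x / t) \<le> 1"
proof -
  from assms(1) obtain s where s: "0 < s" "modular p (\<lambda>x. f x / s) \<le> 1" "ennreal s < ennreal t"
    unfolding lux_norm_eq_INF_modular by (auto simp: INF_less_iff)
  have "s < t" using s(3) by (metis ennreal_leI not_le)
  then have "\<bar>f x / t\<bar> \<le> \<bar>f x / s\<bar>" for x
    using s(1) by (simp add: abs_div frac_le)
  then have "modular p (\<lambda>x. f x / t) \<le> modular p (\<lambda>x. f x / s)"
    using assms(2) by (rule modular_mono)
  then show ?thesis using s(2) by simp
qed

lemma lux_norm_mono:
  assumes "\<And>x. \<bar>g x\<bar> \<le> \<bar>h x\<bar>" "\<And>x. 0 \<le> p x"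
  shows "lux_norm p g \<le> lux_norm p h"
  unfolding lux_norm_eq_INF_modular
proof (rule INF_superset_mono)
  have "modular p (\<lambda>x. g x / t) \<le> modular p (\<lambda>x. h x / t)" if "0 < t" for t
    using assms that by (intro modular_mono) (auto simp: abs_div divide_right_mono)
  then show "{t. 0 < t \<and> modular p (\<lambda>x. h x / t) \<le> 1} \<subseteq> {t. 0 < t \<and> modular p (\<lambda>x. g x / t) \<le> 1}"
    by (auto intro: order.trans)
qed simp

text \<open>Since \<open>p \<ge> 1\<close>, dividing by the number \<open>N\<close> of covering sets scales the modular by at
  most \<open>1 / N\<close>, while each point is counted in at least one of the \<open>N\<close> modulars.\<close>

lemma modular_cover_le:
  fixes p f :: "real^'n::finite \<Rightarrow> real" and B :: "'i \<Rightarrow> (real^'n) set"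
  assumes p: "p \<in> borel_measurable lebesgue" "\<And>x. 1 \<le> p x"
    and f: "f \<in> borel_measurable lebesgue"
    and I: "finite I" "I \<noteq> {}" and B: "\<And>i. i \<in> I \<Longrightarrow> B i \<in> sets lebesgue"
    and cover: "A \<subseteq> (\<Union>i\<in>I. B i)"
  defines "N \<equiv> real (card I)"
  shows "modular p (\<lambda>x. f x * indicator A x / (N * s))
    \<le> ennreal (1 / N) * (\<Sum>i\<in>I. modular p (\<lambda>x. f x * indicator (B i) x / s))"
proof -
  have N: "1 \<le> N" using I by (simp add: N_def Suc_leI card_gt_0_iff)
  have pointwise: "ennreal (\<bar>f x * indicator A x / (N * s)\<bar> powr p x)
      \<le> ennreal (1 / N) * (\<Sum>i\<in>I. ennreal (\<bar>f x * indicator (B i) x / s\<bar> powr p x))" for x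
  proof (cases "x \<in> A")
    case True
    then obtain i where i: "i \<in> I" "x \<in> B i" using cover by auto
    have "\<bar>f x / (N * s)\<bar> powr p x = (1 / N) powr p x * \<bar>f x / s\<bar> powr p x"
      using N by (simp add: abs_div abs_mult powr_mult[symmetric])
    also have "\<dots> \<le> (1 / N) * \<bar>f x / s\<bar> powr p x"
      using N p(2)[of x] powr_mono'[of 1 "p x" "1 / N"] by (intro mult_right_mono) auto
    finally have "ennreal (\<bar>f x * indicator A x / (N * s)\<bar> powr p x)
        \<le> ennreal (1 / N) * ennreal (\<bar>f x * indicator (B i) x / s\<bar> powr p x)"
      using True i N by (simp add: ennreal_mult'' [symmetric] ennreal_leI)
    also have "\<dots> \<le> ennreal (1 / N) * (\<Sum>i\<in>I. ennreal (\<bar>f x * indicator (B i) x / s\<bar> powr p x))"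
      by (intro mult_left_mono member_le_sum i I) auto
    finally show ?thesis .
  qed simp
  have "modular p (\<lambda>x. f x * indicator A x / (N * s))
      \<le> (\<integral>\<^sup>+ x. ennreal (1 / N) * (\<Sum>i\<in>I. ennreal (\<bar>f x * indicator (B i) x / s\<bar> powr p x)) \<partial>lebesgue)"
    unfolding modular_def by (rule nn_integral_mono) (rule pointwise)
  also have "\<dots> = ennreal (1 / N) * (\<Sum>i\<in>I. modular p (\<lambda>x. f x * indicator (B i) x / s))"
    unfolding modular_def using B p f
    by (subst nn_integral_cmult, measurable, subst nn_integral_sum, measurable)
  finally show ?thesis .
qed

lemma lux_norm_cover_le:
  fixes p f :: "real^'n::finite \<Rightarrow> real" and B :: "'i \<Rightarrow> (real^'n) set"
  assumes p: "p \<in> borel_measurable lebesgue" "\<And>x. 1 \<le> p x"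
    and f: "f \<in> borel_measurable lebesgue"
    and I: "finite I" "I \<noteq> {}" and B: "\<And>i. i \<in> I \<Longrightarrow> B i \<in> sets lebesgue"
    and cover: "A \<subseteq> (\<Union>i\<in>I. B i)"
    and bound: "\<And>i. i \<in> I \<Longrightarrow> lux_norm p (\<lambda>x. f x * indicator (B i) x) \<le> c"
  shows "lux_norm p (\<lambda>x. f x * indicator A x) \<le> ennreal (real (card I)) * c"
proof (cases "c = \<infinity>")
  case True
  then show ?thesis using I by (simp add: ennreal_mult_top)
next
  case False
  then obtain c0 where c0: "c = ennreal c0" "0 \<le> c0" by (cases c) auto
  define N where "N = real (card I)"
  have N: "1 \<le> N" using I by (simp add: N_def Suc_leI card_gt_0_iff)
  have "lux_norm p (\<lambda>x. f x * indicator A x) \<le> ennreal (N * c0)"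
  proof (rule lux_norm_le_if_modular_le_1)
    fix t assume t: "N * c0 < t"
    have "modular p (\<lambda>x. f x * indicator (B i) x / (t / N)) \<le> 1" if "i \<in> I" for i
    proof (rule modular_le_1_if_lux_norm_less)
      have "c0 < t / N" using t N by (simp add: field_simps)
      then show "lux_norm p (\<lambda>x. f x * indicator (B i) x) < ennreal (t / N)"
        using bound[OF that] c0 by (metis ennreal_lessI le_less_trans)
    qed (use p(2) in \<open>auto intro: order.trans[OF zero_le_one]\<close>)
    then have "(\<Sum>i\<in>I. modular p (\<lambda>x. f x * indicator (B i) x / (t / N))) \<le> (\<Sum>i\<in>I. 1)"
      by (rule sum_mono)
    also have "(\<Sum>i\<in>I. 1) = ennreal N" by (simp add: N_def ennreal_of_nat_eq_real_of_nat)
    finally have "(\<Sum>i\<in>I. modular p (\<lambda>x. f x * indicator (B i) x / (t / N))) \<le> ennreal N" .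
    moreover have "modular p (\<lambda>x. f x * indicator A x / t)
        \<le> ennreal (1 / N) * (\<Sum>i\<in>I. modular p (\<lambda>x. f x * indicator (B i) x / (t / N)))"
      using modular_cover_le[OF p f I B cover, of "t / N"] N by (simp add: N_def)
    ultimately have "modular p (\<lambda>x. f x * indicator A x / t) \<le> ennreal (1 / N) * ennreal N"
      by (meson mult_left_mono order.trans zero_le)
    also have "\<dots> = 1" using N by (simp add: ennreal_mult'' [symmetric])
    finally show "modular p (\<lambda>x. f x * indicator A x / t) \<le> 1" .
  qed (use c0 N in simp)
  then show ?thesis using c0 by (simp add: N_def ennreal_mult'')
qed

lemma epow_mono: "x \<le> y \<Longrightarrow> 0 \<le> a \<Longrightarrow> epow x a \<le> epow y a"
proof (cases "y = top")
  case False
  assume "x \<le> y" "0 \<le> a"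
  moreover from this False have "x \<noteq> top" using neq_top_trans by blast
  ultimately show ?thesis using False
    by (auto simp: epow_def top.not_eq_extremum intro!: ennreal_leI powr_mono2 enn2real_mono)
qed (simp add: epow_def)

lemma epow_cmult:
  assumes "0 < d" shows "epow (ennreal d * x) a = ennreal (d powr a) * epow x a"
proof (cases x)
  case (real x0)
  then have "epow (ennreal d * x) a = ennreal ((d * x0) powr a)"
    using assms by (simp add: epow_def ennreal_mult [symmetric])
  also have "\<dots> = ennreal (d powr a) * ennreal (x0 powr a)"
    using assms real by (simp add: powr_mult ennreal_mult)
  finally show ?thesis using real by (simp add: epow_def)
qed (use assms in \<open>simp add: epow_def ennreal_mult_top\<close>)

lemma epow_le_cmult:
  assumes "x \<le> ennreal d * y" "0 < d" "0 \<le> a"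
  shows "epow x a \<le> ennreal (d powr a) * epow y a"
  using epow_mono[OF assms(1,3)] epow_cmult[OF assms(2)] by simp

lemma ennreal_mult_le_iff_le_inverse_mult:
  assumes "0 < c" shows "ennreal c * x \<le> y \<longleftrightarrow> x \<le> ennreal (1 / c) * y"
proof -
  have inv: "ennreal c * ennreal (1 / c) = 1" "ennreal (1 / c) * ennreal c = 1"
    using assms by (subst ennreal_mult [symmetric]; simp)+
  show ?thesis
  proof
    assume "ennreal c * x \<le> y"
    then have "ennreal (1 / c) * (ennreal c * x) \<le> ennreal (1 / c) * y" by (rule mult_left_mono) simp
    then show "x \<le> ennreal (1 / c) * y" by (simp add: mult.assoc [symmetric] inv)
  next
    assume "x \<le> ennreal (1 / c) * y"
    then have "ennreal c * x \<le> ennreal c * (ennreal (1 / c) * y)" by (rule mult_left_mono) simp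
    then show "ennreal c * x \<le> y" by (simp add: mult.assoc [symmetric] inv)
  qed
qed

text \<open>Unlike for \<open>esssup_AE\<close>, no measurability is needed: the infimum is attained along a
  sequence of essential upper bounds.\<close>

lemma AE_le_Inf_AE_bounds: "AE x in M. f x \<le> Inf {z::ennreal. AE x in M. f x \<le> z}"
proof -
  define Z where "Z = {z::ennreal. AE x in M. f x \<le> z}"
  have "top \<in> Z" by (simp add: Z_def)
  then obtain g :: "nat \<Rightarrow> ennreal" where g: "range g \<subseteq> Z" "Inf Z = (INF i. g i)"
    using ennreal_Inf_countable_INF[of Z] by auto
  from g(1) have "AE x in M. \<forall>i. f x \<le> g i" by (auto simp: Z_def AE_all_countable)
  then have "AE x in M. f x \<le> Inf Z" by eventually_elim (simp add: g(2) le_INF_iff)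
  then show ?thesis by (simp add: Z_def)
qed

lemma AE_ex_in_positive_set:
  assumes "AE x in M. P x" "A \<in> sets M" "emeasure M A \<noteq> 0"
  shows "\<exists>x\<in>A. P x"
proof (rule ccontr)
  assume "\<not> (\<exists>x\<in>A. P x)"
  with assms(1) have "AE x in M. x \<notin> A" by (auto elim: AE_mp)
  then show False using assms(2,3) by (simp add: AE_iff_null_sets [symmetric] null_setsD1)
qed

lemma nn_integral_epow_le_lattice_sum:
  fixes a :: "int^'n::finite \<Rightarrow> ennreal" and G :: "real^'n \<Rightarrow> ennreal" and D :: "(int^'n) set"
  assumes r: "0 < r" and e: "0 \<le> e" and D: "finite D" "D \<noteq> {}" and M: "0 < M"
    and G: "\<And>x. G x \<le> ennreal M * Max ((\<lambda>d. a (cube_index r x + d)) ` D)"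
  shows "(\<integral>\<^sup>+x. epow (G x) e \<partial>lebesgue)
    \<le> ennreal (M powr e * r ^ CARD('n) * card D) * (\<integral>\<^sup>+k. epow (a k) e \<partial>count_space UNIV)"
proof -
  have pointwise: "epow (G x) e \<le> ennreal (M powr e) * (\<Sum>d\<in>D. epow (a (cube_index r x + d)) e)" for x
  proof -
    have "Max ((\<lambda>d. a (cube_index r x + d)) ` D) \<in> (\<lambda>d. a (cube_index r x + d)) ` D"
      using D by (intro Max_in) auto
    then obtain d0 where d0: "d0 \<in> D" "Max ((\<lambda>d. a (cube_index r x + d)) ` D) = a (cube_index r x + d0)"
      by auto
    have "epow (G x) e \<le> ennreal (M powr e) * epow (a (cube_index r x + d0)) e"
      using G[of x] d0(2) by (intro epow_le_cmult M e) simp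
    also have "\<dots> \<le> ennreal (M powr e) * (\<Sum>d\<in>D. epow (a (cube_index r x + d)) e)"
      by (intro mult_left_mono member_le_sum d0(1) D(1)) auto
    finally show ?thesis .
  qed
  have "(\<integral>\<^sup>+x. epow (G x) e \<partial>lebesgue)
      \<le> (\<integral>\<^sup>+x. ennreal (M powr e) * (\<Sum>d\<in>D. epow (a (cube_index r x + d)) e) \<partial>lebesgue)"
    by (rule nn_integral_mono) (rule pointwise)
  also have "\<dots> = ennreal (r ^ CARD('n))
      * (\<integral>\<^sup>+k. ennreal (M powr e) * (\<Sum>d\<in>D. epow (a (k + d)) e) \<partial>count_space UNIV)"
    by (rule nn_integral_cube_index[OF r,
          where \<phi>="\<lambda>k. ennreal (M powr e) * (\<Sum>d\<in>D. epow (a (k + d)) e)"])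
  also have "(\<integral>\<^sup>+k. ennreal (M powr e) * (\<Sum>d\<in>D. epow (a (k + d)) e) \<partial>count_space UNIV)
      = ennreal (M powr e) * (\<Sum>d\<in>D. \<integral>\<^sup>+k. epow (a (k + d)) e \<partial>count_space UNIV)"
    by (simp add: nn_integral_cmult nn_integral_sum)
  also have "(\<Sum>d\<in>D. \<integral>\<^sup>+k. epow (a (k + d)) e \<partial>count_space UNIV)
      = of_nat (card D) * (\<integral>\<^sup>+k. epow (a k) e \<partial>count_space UNIV)"
    by (simp add: nn_integral_count_space_shift[of "\<lambda>k. epow (a k) e"])
  also have "ennreal (r ^ CARD('n)) * (ennreal (M powr e)
        * (of_nat (card D) * (\<integral>\<^sup>+k. epow (a k) e \<partial>count_space UNIV)))
      = ennreal (M powr e * r ^ CARD('n) * card D) * (\<integral>\<^sup>+k. epow (a k) e \<partial>count_space UNIV)"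
    using r by (simp add: ennreal_mult ennreal_of_nat_eq_real_of_nat mult_ac)
  finally show ?thesis .
qed

lemma lattice_sum_epow_le_nn_integral:
  fixes a :: "int^'n::finite \<Rightarrow> ennreal" and G :: "real^'n \<Rightarrow> ennreal"
    and P :: "int^'n \<Rightarrow> (real^'n) set"
  assumes r: "0 < r" and e: "0 \<le> e" and s: "0 < s" and M: "0 < M"
    and P: "\<And>k. P k \<subseteq> cube r k" "\<And>k. P k \<in> sets lebesgue"
      "\<And>k. emeasure lebesgue (P k) = ennreal (s ^ CARD('n))"
    and bound: "\<And>k x. x \<in> P k \<Longrightarrow> a k \<le> ennreal M * G x"
  shows "(\<integral>\<^sup>+k. epow (a k) e \<partial>count_space UNIV)
    \<le> ennreal (M powr e / s ^ CARD('n)) * (\<integral>\<^sup>+x. epow (G x) e \<partial>lebesgue)"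
proof -
  \<comment> \<open>\<open>G\<close> need not be measurable, so constants are kept on the lattice side of the integrals.\<close>
  define c where "c = s ^ CARD('n) / M powr e"
  have c: "0 < c" using s M by (simp add: c_def)
  have "ennreal c * (\<integral>\<^sup>+k. epow (a k) e \<partial>count_space UNIV)
      = (\<integral>\<^sup>+k. (ennreal (1 / M powr e) * epow (a k) e) * emeasure lebesgue (P k) \<partial>count_space UNIV)"
    using s M by (simp add: P(3) c_def nn_integral_multc [symmetric] ennreal_mult [symmetric] mult_ac)
  also have "\<dots> = (\<integral>\<^sup>+x. indicator (P (cube_index r x)) x
      * (ennreal (1 / M powr e) * epow (a (cube_index r x)) e) \<partial>lebesgue)"
    by (rule nn_integral_cube_index_indicator [symmetric, OF r P(2) P(1)])
  also have "\<dots> \<le> (\<integral>\<^sup>+x. epow (G x) e \<partial>lebesgue)"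
  proof (rule nn_integral_mono)
    fix x
    have "ennreal (1 / M powr e) * epow (a k) e \<le> epow (G x) e" if "x \<in> P k" for k
      using epow_le_cmult[OF bound[OF that] M e] M
      by (subst ennreal_mult_le_iff_le_inverse_mult) simp_all
    then show "indicator (P (cube_index r x)) x * (ennreal (1 / M powr e) * epow (a (cube_index r x)) e)
        \<le> epow (G x) e"
      by (simp split: split_indicator)
  qed
  finally show ?thesis using c by (simp add: ennreal_mult_le_iff_le_inverse_mult c_def)
qed

lemma ennreal_cases_ge_1:
  assumes "q \<noteq> \<infinity>" "1 \<le> q"
  obtains qq where "q = ennreal qq" "1 \<le> qq"
  using assms by (cases q) auto

lemma Lq_norm_top_le_lattice_sup:
  fixes a :: "int^'n::finite \<Rightarrow> ennreal" and G :: "real^'n \<Rightarrow> ennreal"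
  assumes D: "finite D" "D \<noteq> {}"
    and G: "\<And>x. G x \<le> ennreal M * Max ((\<lambda>d. a (cube_index r x + d)) ` D)"
  shows "Lq_norm \<infinity> G \<le> ennreal M * lq_seq_norm \<infinity> a"
proof -
  have "Max ((\<lambda>d. a (cube_index r x + d)) ` D) \<le> (SUP k. a k)" for x
    using D by (subst Max_le_iff) (auto intro: SUP_upper)
  then have "G x \<le> ennreal M * (SUP k. a k)" for x
    using G by (meson mult_left_mono order.trans zero_le)
  then show ?thesis by (auto simp: Lq_norm_def lq_seq_norm_def intro: Inf_lower)
qed

lemma lq_seq_norm_top_le_Lq_norm:
  fixes a :: "int^'n::finite \<Rightarrow> ennreal" and G :: "real^'n \<Rightarrow> ennreal"
  assumes local: "\<And>k. \<exists>P\<in>sets lebesgue. emeasure lebesgue P \<noteq> 0 \<and> (\<forall>x\<in>P. a k \<le> ennreal M * G x)"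
  shows "lq_seq_norm \<infinity> a \<le> ennreal M * Lq_norm \<infinity> G"
proof -
  have "a k \<le> ennreal M * Inf {z. AE x in lebesgue. G x \<le> z}" for k
  proof -
    obtain P where P: "P \<in> sets lebesgue" "emeasure lebesgue P \<noteq> 0" "\<forall>x\<in>P. a k \<le> ennreal M * G x"
      using local by blast
    obtain x where "x \<in> P" "G x \<le> Inf {z. AE x in lebesgue. G x \<le> z}"
      using AE_ex_in_positive_set[OF AE_le_Inf_AE_bounds P(1,2)] by blast
    then show ?thesis using P(3) by (meson mult_left_mono order.trans zero_le)
  qed
  then show ?thesis by (auto simp: Lq_norm_def lq_seq_norm_def intro: SUP_least)
qed

lemma Lq_norm_le_lq_seq_norm_finite:
  fixes a :: "int^'n::finite \<Rightarrow> ennreal" and G :: "real^'n \<Rightarrow> ennreal"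
  assumes r: "0 < r" and q: "1 \<le> q" and D: "finite D" "D \<noteq> {}" and M: "0 < M"
    and G: "\<And>x. G x \<le> ennreal M * Max ((\<lambda>d. a (cube_index r x + d)) ` D)"
  shows "Lq_norm (ennreal q) G
    \<le> ennreal ((M powr q * r ^ CARD('n) * card D) powr (1 / q)) * lq_seq_norm (ennreal q) a"
proof -
  have "(\<integral>\<^sup>+x. epow (G x) q \<partial>lebesgue)
      \<le> ennreal (M powr q * r ^ CARD('n) * card D) * (\<integral>\<^sup>+k. epow (a k) q \<partial>count_space UNIV)"
    using q by (intro nn_integral_epow_le_lattice_sum[OF r _ D M G]) simp
  then have "epow (\<integral>\<^sup>+x. epow (G x) q \<partial>lebesgue) (1 / q)
      \<le> ennreal ((M powr q * r ^ CARD('n) * card D) powr (1 / q))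
        * epow (\<integral>\<^sup>+k. epow (a k) q \<partial>count_space UNIV) (1 / q)"
    using q r D M by (intro epow_le_cmult) (auto simp: card_gt_0_iff)
  then show ?thesis using q by (simp add: Lq_norm_def lq_seq_norm_def)
qed

lemma lq_seq_norm_le_Lq_norm_finite:
  fixes a :: "int^'n::finite \<Rightarrow> ennreal" and G :: "real^'n \<Rightarrow> ennreal"
    and P :: "int^'n \<Rightarrow> (real^'n) set"
  assumes r: "0 < r" and q: "1 \<le> q" and s: "0 < s" and M: "0 < M"
    and P: "\<And>k. P k \<subseteq> cube r k" "\<And>k. P k \<in> sets lebesgue"
      "\<And>k. emeasure lebesgue (P k) = ennreal (s ^ CARD('n))"
    and bound: "\<And>k x. x \<in> P k \<Longrightarrow> a k \<le> ennreal M * G x"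
  shows "lq_seq_norm (ennreal q) a
    \<le> ennreal ((M powr q / s ^ CARD('n)) powr (1 / q)) * Lq_norm (ennreal q) G"
proof -
  have "(\<integral>\<^sup>+k. epow (a k) q \<partial>count_space UNIV)
      \<le> ennreal (M powr q / s ^ CARD('n)) * (\<integral>\<^sup>+x. epow (G x) q \<partial>lebesgue)"
    using q by (intro lattice_sum_epow_le_nn_integral[OF r _ s M P bound]) auto
  then have "epow (\<integral>\<^sup>+k. epow (a k) q \<partial>count_space UNIV) (1 / q)
      \<le> ennreal ((M powr q / s ^ CARD('n)) powr (1 / q))
        * epow (\<integral>\<^sup>+x. epow (G x) q \<partial>lebesgue) (1 / q)"
    using q s M by (intro epow_le_cmult) auto
  then show ?thesis using q by (simp add: Lq_norm_def lq_seq_norm_def)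
qed

lemma Lq_norm_le_lq_seq_norm:
  fixes D :: "(int^'n::finite) set"
  assumes r: "0 < r" and q: "1 \<le> q" and D: "finite D" "D \<noteq> {}" and M: "0 < M"
  shows "\<exists>C>0. \<forall>(a :: int^'n \<Rightarrow> ennreal) (G :: real^'n \<Rightarrow> ennreal).
    (\<forall>x. G x \<le> ennreal M * Max ((\<lambda>d. a (cube_index r x + d)) ` D))
      \<longrightarrow> Lq_norm q G \<le> ennreal C * lq_seq_norm q a"
proof (cases "q = \<infinity>")
  case True
  with M show ?thesis using Lq_norm_top_le_lattice_sup[OF D] by blast
next
  case False
  then obtain qq where qq: "q = ennreal qq" "1 \<le> qq" using q by (rule ennreal_cases_ge_1)
  have "0 < (M powr qq * r ^ CARD('n) * card D) powr (1 / qq)"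
    using r D M by (simp add: card_gt_0_iff)
  with qq show ?thesis using Lq_norm_le_lq_seq_norm_finite[OF r qq(2) D M] by blast
qed

lemma lq_seq_norm_le_Lq_norm:
  assumes r: "0 < r" and q: "1 \<le> q" and s: "0 < s" and M: "0 < M"
  shows "\<exists>C>0. \<forall>(a :: int^'n::finite \<Rightarrow> ennreal) (G :: real^'n \<Rightarrow> ennreal).
    (\<forall>k. \<exists>P. P \<subseteq> cube r k \<and> P \<in> sets lebesgue \<and> emeasure lebesgue P = ennreal (s ^ CARD('n))
        \<and> (\<forall>x\<in>P. a k \<le> ennreal M * G x))
      \<longrightarrow> lq_seq_norm q a \<le> ennreal C * Lq_norm q G"
proof (cases "q = \<infinity>")
  case True
  have "lq_seq_norm \<infinity> a \<le> ennreal M * Lq_norm \<infinity> G"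
    if "\<forall>k. \<exists>P. P \<subseteq> cube r k \<and> P \<in> sets lebesgue
        \<and> emeasure lebesgue P = ennreal (s ^ CARD('n)) \<and> (\<forall>x\<in>P. a k \<le> ennreal M * G x)"
    for a :: "int^'n \<Rightarrow> ennreal" and G :: "real^'n \<Rightarrow> ennreal"
  proof (rule lq_seq_norm_top_le_Lq_norm)
    fix k
    from that obtain P where "P \<in> sets lebesgue" "emeasure lebesgue P = ennreal (s ^ CARD('n))"
      "\<forall>x\<in>P. a k \<le> ennreal M * G x"
      by blast
    then show "\<exists>P\<in>sets lebesgue. emeasure lebesgue P \<noteq> 0 \<and> (\<forall>x\<in>P. a k \<le> ennreal M * G x)"
      using s by (intro bexI[of _ P] conjI) simp_all
  qed
  with True M show ?thesis by blast
next
  case False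
  then obtain qq where qq: "q = ennreal qq" "1 \<le> qq" using q by (rule ennreal_cases_ge_1)
  have "lq_seq_norm q a \<le> ennreal ((M powr qq / s ^ CARD('n)) powr (1 / qq)) * Lq_norm q G"
    if "\<forall>k. \<exists>P. P \<subseteq> cube r k \<and> P \<in> sets lebesgue
        \<and> emeasure lebesgue P = ennreal (s ^ CARD('n)) \<and> (\<forall>x\<in>P. a k \<le> ennreal M * G x)"
    for a :: "int^'n \<Rightarrow> ennreal" and G :: "real^'n \<Rightarrow> ennreal"
  proof -
    from that obtain P where P: "\<And>k. P k \<subseteq> cube r k" "\<And>k. P k \<in> sets lebesgue"
      "\<And>k. emeasure lebesgue (P k) = ennreal (s ^ CARD('n))" "\<And>k x. x \<in> P k \<Longrightarrow> a k \<le> ennreal M * G x"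
      by metis
    show ?thesis unfolding qq(1) by (rule lq_seq_norm_le_Lq_norm_finite[OF r qq(2) s M P])
  qed
  moreover have "0 < (M powr qq / s ^ CARD('n)) powr (1 / qq)" using s M by simp
  ultimately show ?thesis by blast
qed

lemma lux_norm_ball_le_neighbour_cubes:
  fixes p f :: "real^'n::finite \<Rightarrow> real"
  assumes p: "p \<in> borel_measurable lebesgue" "\<And>x. 1 \<le> p x"
    and f: "f \<in> borel_measurable lebesgue" and r: "0 < r"
  shows "lux_norm p (\<lambda>y. f y * indicator (ball x r) y)
    \<le> ennreal (card (int_box (-1) 1 :: (int^'n) set))
      * Max ((\<lambda>d. lux_norm p (\<lambda>y. f y * indicator (cube r (cube_index r x + d)) y)) ` int_box (-1) 1)"
proof (rule lux_norm_cover_le[OF p f finite_int_box])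
  show "int_box (-1) 1 \<noteq> {}" using zero_in_int_box[of "-1" 1] by auto
  show "ball x r \<subseteq> (\<Union>d\<in>int_box (-1) 1. cube r (cube_index r x + d))"
    by (rule ball_subset_neighbour_cubes[OF r])
qed (auto intro: Max_ge finite_int_box)

lemma lux_norm_cube_le_ball:
  fixes p f :: "real^'n::finite \<Rightarrow> real"
  assumes p: "p \<in> borel_measurable lebesgue" "\<And>x. 1 \<le> p x"
    and f: "f \<in> borel_measurable lebesgue" and r: "0 < r"
  shows "\<exists>P. P \<subseteq> cube r k \<and> P \<in> sets lebesgue
    \<and> emeasure lebesgue P = ennreal ((r / (real CARD('n) + 1)) ^ CARD('n))
    \<and> (\<forall>x\<in>P. lux_norm p (\<lambda>y. f y * indicator (cube r k) y)
        \<le> ennreal (card (int_box 0 (int CARD('n)) :: (int^'n) set))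
          * lux_norm p (\<lambda>y. f y * indicator (ball x r) y))"
proof -
  define m where "m = CARD('n) + 1"
  define E where "E = (int_box 0 (int CARD('n)) :: (int^'n) set)"
  define F where "F e = lux_norm p (\<lambda>y. f y * indicator (cube (r / m) (subcube_index m k e)) y)" for e
  have m: "0 < m" "real m = real CARD('n) + 1" "int m - 1 = int CARD('n)" by (simp_all add: m_def)
  have E: "finite E" "E \<noteq> {}" using zero_in_int_box[of 0 "int CARD('n)"] by (auto simp: E_def finite_int_box)
  then have "Max (F ` E) \<in> F ` E" by (intro Max_in) auto
  then obtain e where e: "e \<in> E" "F e = Max (F ` E)" by auto
  have cover: "lux_norm p (\<lambda>y. f y * indicator (cube r k) y) \<le> ennreal (card E) * F e"
  proof (rule lux_norm_cover_le[OF p f E])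
    show "cube r k \<subseteq> (\<Union>e\<in>E. cube (r / m) (subcube_index m k e))"
      using cube_subset_subcubes[OF r m(1)] by (simp add: E_def m(3))
  qed (use e E in \<open>auto simp: F_def [symmetric]\<close>)
  have "lux_norm p (\<lambda>y. f y * indicator (cube r k) y)
      \<le> ennreal (card E) * lux_norm p (\<lambda>y. f y * indicator (ball x r) y)"
    if "x \<in> cube (r / m) (subcube_index m k e)" for x
  proof -
    have "cube (r / m) (subcube_index m k e) \<subseteq> ball x r"
      using r m(2) that by (intro cube_subset_ball) (auto simp: field_simps)
    then have "F e \<le> lux_norm p (\<lambda>y. f y * indicator (ball x r) y)" unfolding F_def
      using p(2) by (intro lux_norm_mono) (auto split: split_indicator intro: order.trans[OF zero_le_one])
    then show ?thesis using cover by (meson mult_left_mono order.trans zero_le)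
  qed
  moreover have "cube (r / m) (subcube_index m k e) \<subseteq> cube r k"
    using subcube_subset_cube[OF r m(1)] e(1) by (simp add: E_def m(3))
  moreover have "emeasure lebesgue (cube (r / m) (subcube_index m k e))
      = ennreal ((r / (real CARD('n) + 1)) ^ CARD('n))"
    using emeasure_cube[of "r / m" "subcube_index m k e"] r by (simp add: m_def add.commute)
  ultimately show ?thesis unfolding E_def by (intro exI[of _ "cube (r / m) (subcube_index m k e)"]) auto
qed

lemma weighted_ball_norm_le_cube_norm:
  fixes p w :: "real^'n::finite \<Rightarrow> real"
  assumes p: "p \<in> borel_measurable lebesgue" "\<And>x. 1 \<le> p x"
    and r: "0 < r" and q: "1 \<le> q" and w: "\<And>x. 0 \<le> w x" "\<And>x. w x \<le> w1"
  shows "\<exists>C>0. \<forall>f. f \<in> borel_measurable lebesgue \<longrightarrow>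
    Lq_norm q (\<lambda>x. ennreal (w x) * lux_norm p (\<lambda>y. f y * indicator (ball x r) y))
      \<le> ennreal C * lq_seq_norm q (\<lambda>k. lux_norm p (\<lambda>y. f y * indicator (cube r k) y))"
proof -
  define D where "D = (int_box (-1) 1 :: (int^'n) set)"
  define M where "M = (w1 + 1) * card D"
  have D: "finite D" "D \<noteq> {}" using zero_in_int_box[of "-1" 1] by (auto simp: D_def finite_int_box)
  have "0 \<le> w1" using w by (meson order.trans)
  then have M: "0 < M" using D by (simp add: M_def card_gt_0_iff)
  obtain C where "0 < C" and C: "\<forall>(a :: int^'n \<Rightarrow> ennreal) (G :: real^'n \<Rightarrow> ennreal).
      (\<forall>x. G x \<le> ennreal M * Max ((\<lambda>d. a (cube_index r x + d)) ` D))
        \<longrightarrow> Lq_norm q G \<le> ennreal C * lq_seq_norm q a"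
    using Lq_norm_le_lq_seq_norm[OF r q D M] by blast
  have "Lq_norm q (\<lambda>x. ennreal (w x) * lux_norm p (\<lambda>y. f y * indicator (ball x r) y))
      \<le> ennreal C * lq_seq_norm q (\<lambda>k. lux_norm p (\<lambda>y. f y * indicator (cube r k) y))"
    if f: "f \<in> borel_measurable lebesgue" for f
  proof (rule C [rule_format])
    fix x
    have "ennreal (w x) \<le> ennreal (w1 + 1)" using w by (intro ennreal_leI) (meson add_increasing2 zero_le_one)
    then have "ennreal (w x) * lux_norm p (\<lambda>y. f y * indicator (ball x r) y)
        \<le> ennreal (w1 + 1) * (ennreal (card D)
          * Max ((\<lambda>d. lux_norm p (\<lambda>y. f y * indicator (cube r (cube_index r x + d)) y)) ` D))"
      using lux_norm_ball_le_neighbour_cubes[OF p f r, of x] by (intro mult_mono) (auto simp: D_def)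
    then show "ennreal (w x) * lux_norm p (\<lambda>y. f y * indicator (ball x r) y)
        \<le> ennreal M * Max ((\<lambda>d. lux_norm p (\<lambda>y. f y * indicator (cube r (cube_index r x + d)) y)) ` D)"
      using \<open>0 \<le> w1\<close> by (simp add: M_def ennreal_mult mult.assoc)
  qed
  with \<open>0 < C\<close> show ?thesis by blast
qed

lemma cube_norm_le_weighted_ball_norm:
  fixes p w :: "real^'n::finite \<Rightarrow> real"
  assumes p: "p \<in> borel_measurable lebesgue" "\<And>x. 1 \<le> p x"
    and r: "0 < r" and q: "1 \<le> q" and w: "0 < w0" "\<And>x. w0 \<le> w x"
  shows "\<exists>C>0. \<forall>f. f \<in> borel_measurable lebesgue \<longrightarrow>
    lq_seq_norm q (\<lambda>k. lux_norm p (\<lambda>y. f y * indicator (cube r k) y))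
      \<le> ennreal C * Lq_norm q (\<lambda>x. ennreal (w x) * lux_norm p (\<lambda>y. f y * indicator (ball x r) y))"
proof -
  define s where "s = r / (real CARD('n) + 1)"
  define N where "N = real (card (int_box 0 (int CARD('n)) :: (int^'n) set))"
  have s: "0 < s" using r by (simp add: s_def)
  have N: "0 < N" using zero_in_int_box[of 0 "int CARD('n)"] finite_int_box
    by (auto simp: N_def card_gt_0_iff)
  obtain C where "0 < C" and C: "\<forall>(a :: int^'n \<Rightarrow> ennreal) (G :: real^'n \<Rightarrow> ennreal).
      (\<forall>k. \<exists>P. P \<subseteq> cube r k \<and> P \<in> sets lebesgue \<and> emeasure lebesgue P = ennreal (s ^ CARD('n))
          \<and> (\<forall>x\<in>P. a k \<le> ennreal (N / w0) * G x))
        \<longrightarrow> lq_seq_norm q a \<le> ennreal C * Lq_norm q G"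
    using lq_seq_norm_le_Lq_norm[OF r q s, where M="N / w0"] N w(1) by auto
  have weight: "ennreal N * g \<le> ennreal (N / w0) * (ennreal (w x) * g)" for x g
  proof -
    have "ennreal N * g \<le> ennreal (N / w0 * w x) * g"
      using w N by (intro mult_right_mono ennreal_leI) (simp_all add: field_simps)
    also have "\<dots> = ennreal (N / w0) * (ennreal (w x) * g)"
      using w(1) w(2)[of x] N by (subst ennreal_mult) (simp_all add: mult.assoc)
    finally show ?thesis .
  qed
  have "lq_seq_norm q (\<lambda>k. lux_norm p (\<lambda>y. f y * indicator (cube r k) y))
      \<le> ennreal C * Lq_norm q (\<lambda>x. ennreal (w x) * lux_norm p (\<lambda>y. f y * indicator (ball x r) y))"
    if f: "f \<in> borel_measurable lebesgue" for f
  proof (rule C [rule_format])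
    fix k
    obtain P where P: "P \<subseteq> cube r k" "P \<in> sets lebesgue" "emeasure lebesgue P = ennreal (s ^ CARD('n))"
      "\<forall>x\<in>P. lux_norm p (\<lambda>y. f y * indicator (cube r k) y)
          \<le> ennreal N * lux_norm p (\<lambda>y. f y * indicator (ball x r) y)"
      using lux_norm_cube_le_ball[OF p f r, of k] unfolding s_def N_def by blast
    then show "\<exists>P. P \<subseteq> cube r k \<and> P \<in> sets lebesgue \<and> emeasure lebesgue P = ennreal (s ^ CARD('n))
        \<and> (\<forall>x\<in>P. lux_norm p (\<lambda>y. f y * indicator (cube r k) y)
          \<le> ennreal (N / w0) * (ennreal (w x) * lux_norm p (\<lambda>y. f y * indicator (ball x r) y)))"
      using weight by (intro exI[of _ P]) (auto intro: order.trans)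
  qed
  with \<open>0 < C\<close> show ?thesis by blast
qed

lemma powr_between_exponents:
  fixes r a u b :: real
  assumes "0 < r" "a \<le> u" "u \<le> b"
  shows "min (r powr a) (r powr b) \<le> r powr u" "r powr u \<le> max (r powr a) (r powr b)"
proof (atomize (full), cases "1 \<le> r")
  case True
  then show "min (r powr a) (r powr b) \<le> r powr u \<and> r powr u \<le> max (r powr a) (r powr b)"
    using assms powr_mono[of a u r] powr_mono[of u b r] by auto
next
  case False
  then show "min (r powr a) (r powr b) \<le> r powr u \<and> r powr u \<le> max (r powr a) (r powr b)"
    using assms powr_mono'[of a u r] powr_mono'[of u b r] by auto
qed

lemma ennreal_scaled_two_sided_bound:
  assumes "0 < K" "0 < c1" "0 < c2" "R \<le> ennreal c1 * A" "A \<le> ennreal c2 * R"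
  shows "ennreal (K / c1) * R \<le> ennreal K * A \<and> ennreal K * A \<le> ennreal (K * c2) * R"
proof
  have "ennreal (K / c1) * R \<le> ennreal (K / c1) * (ennreal c1 * A)"
    using assms(4) by (rule mult_left_mono) simp
  also have "\<dots> = ennreal K * A"
    using assms by (simp add: mult.assoc [symmetric] ennreal_mult [symmetric])
  finally show "ennreal (K / c1) * R \<le> ennreal K * A" .
  have "ennreal K * A \<le> ennreal K * (ennreal c2 * R)"
    using assms(5) by (rule mult_left_mono) simp
  also have "\<dots> = ennreal (K * c2) * R"
    using assms by (simp add: ennreal_mult mult.assoc)
  finally show "ennreal K * A \<le> ennreal (K * c2) * R" .
qed

lemma cube_ball_norms_equivalent:
  fixes p w :: "real^'n::finite \<Rightarrow> real"
  assumes p: "p \<in> borel_measurable lebesgue" "\<And>x. 1 \<le> p x"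
    and r: "0 < r" and q: "1 \<le> q" and w: "0 < w0" "\<And>x. w0 \<le> w x" "\<And>x. w x \<le> w1"
    and K: "0 < K"
  shows "\<exists>c C. 0 < c \<and> 0 < C \<and>
    (\<forall>f :: real^'n \<Rightarrow> real. f \<in> borel_measurable lebesgue \<longrightarrow>
      (let L = ennreal K * lq_seq_norm q (\<lambda>k. lux_norm p (\<lambda>x. f x * indicator (cube r k) x));
           R = Lq_norm q (\<lambda>x. ennreal (w x) * lux_norm p (\<lambda>y. f y * indicator (ball x r) y))
       in ennreal c * R \<le> L \<and> L \<le> ennreal C * R))"
proof -
  have w_nonneg: "0 \<le> w x" for x using w(1) w(2)[of x] by simp
  obtain C1 where C1: "0 < C1" "\<forall>f. f \<in> borel_measurable lebesgue \<longrightarrow>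
      Lq_norm q (\<lambda>x. ennreal (w x) * lux_norm p (\<lambda>y. f y * indicator (ball x r) y))
        \<le> ennreal C1 * lq_seq_norm q (\<lambda>k. lux_norm p (\<lambda>y. f y * indicator (cube r k) y))"
    using weighted_ball_norm_le_cube_norm[where w = w, OF p r q w_nonneg w(3)] by blast
  obtain C2 where C2: "0 < C2" "\<forall>f. f \<in> borel_measurable lebesgue \<longrightarrow>
      lq_seq_norm q (\<lambda>k. lux_norm p (\<lambda>y. f y * indicator (cube r k) y))
        \<le> ennreal C2 * Lq_norm q (\<lambda>x. ennreal (w x) * lux_norm p (\<lambda>y. f y * indicator (ball x r) y))"
    using cube_norm_le_weighted_ball_norm[where w = w, OF p r q w(1,2)] by blast
  have "ennreal (K / C1) * Lq_norm q (\<lambda>x. ennreal (w x) * lux_norm p (\<lambda>y. f y * indicator (ball x r) y))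
      \<le> ennreal K * lq_seq_norm q (\<lambda>k. lux_norm p (\<lambda>y. f y * indicator (cube r k) y))
    \<and> ennreal K * lq_seq_norm q (\<lambda>k. lux_norm p (\<lambda>y. f y * indicator (cube r k) y))
      \<le> ennreal (K * C2) * Lq_norm q (\<lambda>x. ennreal (w x) * lux_norm p (\<lambda>y. f y * indicator (ball x r) y))"
    if "f \<in> borel_measurable lebesgue" for f
    using ennreal_scaled_two_sided_bound[OF K C1(1) C2(1) C1(2)[rule_format, OF that] C2(2)[rule_format, OF that]] .
  then show ?thesis using K C1(1) C2(1) unfolding Let_def
    by (intro exI[of _ "K / C1"] exI[of _ "K * C2"]) auto
qed

theorem lemma3p2:
  fixes p :: "real^'n \<Rightarrow> real" and q \<alpha> :: ennreal
  assumes "var_exp p"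
    and "1 \<le> q" and "1 \<le> \<alpha>"
    and "\<And>x. ennreal (p x) \<le> \<alpha>" and "\<alpha> \<le> q"
  shows "\<forall>r>0. \<exists>c C. 0 < c \<and> 0 < C \<and>
    (\<forall>f :: real^'n \<Rightarrow> real. f \<in> borel_measurable lebesgue \<longrightarrow>
      (let L = ennreal (r powr (real CARD('n) * einv \<alpha> - N_rp r p)) *
               lq_seq_norm q (\<lambda>k. lux_norm p (\<lambda>x. f x * indicator (cube r k) x));
           R = Lq_norm q (\<lambda>x. ennreal (r powr (real CARD('n) * einv \<alpha>
                    - real CARD('n) / p x - real CARD('n) * einv q))
                  * lux_norm p (\<lambda>y. f y * indicator (ball x r) y))
       in ennreal c * R \<le> L \<and> L \<le> ennreal C * R))"
proof (intro allI impI, goal_cases)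
  case (1 r)
  then have r: "0 < r" .
  from assms(1) have p: "p \<in> borel_measurable lebesgue" "\<And>x. 1 \<le> p x" by (auto simp: var_exp_def)
  define n where "n = real CARD('n)"
  define E where "E = n * einv \<alpha> - n * einv q"
  define w where "w x = r powr (n * einv \<alpha> - n / p x - n * einv q)" for x
  have "0 \<le> n / p x" "n / p x \<le> n" for x
    using p(2)[of x] divide_left_mono[of 1 "p x" n] by (auto simp: n_def)
  moreover have "w x = r powr (E - n / p x)" for x by (simp add: w_def E_def algebra_simps)
  ultimately have w: "min (r powr (E - n)) (r powr E) \<le> w x" "w x \<le> max (r powr (E - n)) (r powr E)"
    for x using powr_between_exponents[OF r, of "E - n" "E - n / p x" E] by simp_all
  have "0 < min (r powr (E - n)) (r powr E)" "0 < r powr (n * einv \<alpha> - N_rp r p)" using r by simp_all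
  from cube_ball_norms_equivalent[where w = w, OF p r assms(2) this(1) w this(2)]
  show ?case unfolding w_def n_def .
qed

end
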